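(* Consider three qubits $A,B,C$, each with Hilbert space $\mathbb{C}^2$ and computational basis $\{|0\rangle,|1\rangle\}$. Define the unit vectors \[ |\psi_{AB}\rangle=\tfrac{1}{\sqrt{217}}\big(6|01\rangle-9|10\rangle-10|11\rangle\big)\in\mathbb{C}^2_A\otimes\mathbb{C}^2_B, \] \[ |\psi_{AC}\rangle=\tfrac{1}{\sqrt{46}}\big(-2|00\rangle-4|01\rangle-|10\rangle+5|11\rangle\big)\in\mathbb{C}^2_A\otimes\mathbb{C}^2_C, \] \[ |\psi_{BC}\rangle=\tfrac{1}{\sqrt{53}}\big(-6|00\rangle-|01\rangle-4|10\rangle\big)\in\mathbb{C}^2_B\otimes\mathbb{C}^2_C, \] and the operators on $\mathbb{C}^2_A\otimes\mathbb{C}^2_B\otimes\mathbb{C}^2_C$ \[ H=\tfrac16\Big(|\psi_{AB}\rangle\langle\psi_{AB}|\otimes I_C+|\psi_{AC}\rangle\langle\psi_{AC}|\otimes I_B+I_A\otimes|\psi_{BC}\rangle\langle\psi_{BC}|\Big), \] \[ H_{\mathrm{target}}=\tfrac16\Big(|0\rangle\langle0|_A\otimes|0\rangle\langle0|_B\otimes I_C+|0\rangle\langle0|_A\otimes I_B\otimes|0\rangle\langle0|_C+I_A\otimes|0\rangle\langle0|_B\otimes|0\rangle\langle0|_C\Big). \] Then the sum of the three largest eigenvalues of $H$ strictly exceeds $5/6$, which is the sum of the three largest eigenvalues of $H_{\mathrm{target}}$. Consequently $H\preceq H_{\mathrm{target}}$ fails; i.e., with $Q=I/2$ on $\mathbb{C}^2$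 (for which $|0\rangle$ is a maximal eigenvector), $n=3$, and $\mu$ the uniform probability measure on the 2-element subsets of $\{A,B,C\}$, there exist pure states $(|\psi_I\rangle)_I$ such that $\sum_I \mu_I |\psi_I\rangle\langle\psi_I|\otimes Q^{\otimes I^c}\not\preceq \sum_I\mu_I |q_1\rangle\langle q_1|^{\otimes I}\otimes Q^{\otimes I^c}$ (with $|q_1\rangle=|0\rangle$).
   Context: Operators such as $|\psi_{AC}\rangle\langle\psi_{AC}|\otimes I_B$ denote the operator acting as $|\psi_{AC}\rangle\langle\psi_{AC}|$ on qubits $A,C$ and as the identity on qubit $B$ (embedded in the ordering $A\otimes B\otimes C$); similarly for the other terms. For Hermitian matrices $X,Y$ of the same size, $X\preceq Y$ (majorization) means that, with eigenvalues listed in nonincreasing order, $\sum_{i=1}^k\lambda_i(X)\le\sum_{i=1}^k\lambda_i(Y)$ for every $k$, with equality when $k$ equals the dimension (equal traces). For $I\subseteq\{A,B,C\}$, $I^c$ is its complement and $Q^{\otimes I^c}$ is $Q$ tensored on the qubits in $I^c$. *)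

theory Defs
  imports "Jordan_Normal_Form.Char_Poly" "HOL-Library.Multiset"
begin

(* Three qubits A,B,C indexed 0,1,2; basis index of |a b c> is 4a+2b+c. *)
definition qbit :: "nat \<Rightarrow> nat \<Rightarrow> nat" where
  "qbit i k = (i div 2 ^ (2 - k)) mod 2"

(* embed a two-qubit operator M (basis index 2x+y for |x>_p |y>_q, p<q) acting on
   qubits p,q, tensored with the identity on the remaining qubit r *)
definition embed2 :: "nat \<Rightarrow> nat \<Rightarrow> nat \<Rightarrow> complex mat \<Rightarrow> complex mat" where
  "embed2 p q r M = mat 8 8 (\<lambda>(i,j).
     if qbit i r = qbit j r then M $$ (2 * qbit i p + qbit i q, 2 * qbit j p + qbit j q) else 0)"

definition ketbra :: "complex vec \<Rightarrow> complex mat" where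
  "ketbra v = mat (dim_vec v) (dim_vec v) (\<lambda>(i,j). v $ i * cnj (v $ j))"

definition hermitian :: "complex mat \<Rightarrow> bool" where
  "hermitian X \<longleftrightarrow> X \<in> carrier_mat (dim_row X) (dim_row X) \<and>
     (\<forall>i < dim_row X. \<forall>j < dim_row X. X $$ (i,j) = cnj (X $$ (j,i)))"

definition eigs_desc :: "complex mat \<Rightarrow> real list" where
  "eigs_desc X = rev (sorted_list_of_multiset (image_mset Re (proots (char_poly X))))"

definition top_eig_sum :: "nat \<Rightarrow> complex mat \<Rightarrow> real" where
  "top_eig_sum k X = sum_list (take k (eigs_desc X))"

definition majorized :: "complex mat \<Rightarrow> complex mat \<Rightarrow> bool" where
  "majorized X Y \<longleftrightarrow> (\<forall>k \<le> dim_row X. top_eig_sum k X \<le> top_eig_sum k Y) \<and>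
     top_eig_sum (dim_row X) X = top_eig_sum (dim_row X) Y"

definition psiAB :: "complex vec" where
  "psiAB = vec_of_list (map (\<lambda>x. complex_of_real (x / sqrt 217)) [0, 6, -9, -10])"
definition psiAC :: "complex vec" where
  "psiAC = vec_of_list (map (\<lambda>x. complex_of_real (x / sqrt 46)) [-2, -4, -1, 5])"
definition psiBC :: "complex vec" where
  "psiBC = vec_of_list (map (\<lambda>x. complex_of_real (x / sqrt 53)) [-6, -1, -4, 0])"

definition ket00 :: "complex vec" where
  "ket00 = vec_of_list [1, 0, 0, 0]"

definition Hmat :: "complex mat" where
  "Hmat = (1/6 :: complex) \<cdot>\<^sub>m (embed2 0 1 2 (ketbra psiAB) + embed2 0 2 1 (ketbra psiAC)
                                 + embed2 1 2 0 (ketbra psiBC))"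

definition Htarget :: "complex mat" where
  "Htarget = (1/6 :: complex) \<cdot>\<^sub>m (embed2 0 1 2 (ketbra ket00) + embed2 0 2 1 (ketbra ket00)
                                 + embed2 1 2 0 (ketbra ket00))"

end

theory Submission
  imports Defs
begin

(* H is 1/3174276 times a symmetric integer matrix, so every real root of its real characteristic
   polynomial is an eigenvalue.  That polynomial changes sign at each step of
   393/2000 < 63/200 < 161/500 < 1/2, hence H has an eigenvalue strictly inside each of the three
   intervals, and its three largest eigenvalues sum to more than
   393/2000 + 63/200 + 161/500 = 1667/2000 > 5/6.  Each sign is that of the determinant of an
   integer matrix, certified by an exact triangularisation.  Htarget is diagonal with spectrum
   1/2, 1/6, 1/6, 1/6, 0, 0, 0, 0, so already the partial sums for k = 3 violate majorization. *)

lemma less_8_cases: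
  "(i::nat) < 8 \<longleftrightarrow> i = 0 \<or> i = 1 \<or> i = 2 \<or> i = 3 \<or> i = 4 \<or> i = 5 \<or> i = 6 \<or> i = 7"
  by auto

lemma all_less_8_iff:
  "(\<forall>i<8::nat. P i) \<longleftrightarrow> P 0 \<and> P 1 \<and> P 2 \<and> P 3 \<and> P 4 \<and> P 5 \<and> P 6 \<and> P 7"
  unfolding less_8_cases by blast

lemma sum_atLeastLessThan_0_8:
  "(\<Sum>k = 0..<8::nat. f k) = f 0 + f 1 + f 2 + f 3 + f 4 + f 5 + f 6 + f 7"
  by (simp add: eval_nat_numeral)

lemma prod_atLeastLessThan_0_8:
  "(\<Prod>k = 0..<8::nat. f k) = f 0 * f 1 * f 2 * f 3 * f 4 * f 5 * f 6 * f 7"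
  by (simp add: eval_nat_numeral)

lemma qbit_less_2: "qbit i k < 2"
  by (simp add: qbit_def)

lemma two_qbit_index_less_4: "2 * qbit i p + qbit i q < 4"
  using qbit_less_2[of i p] qbit_less_2[of i q] by linarith

lemma ketbra_vec_of_list_nth:
  "a < length l \<Longrightarrow> b < length l \<Longrightarrow> ketbra (vec_of_list l) $$ (a, b) = l ! a * cnj (l ! b)"
  by (simp add: ketbra_def vec_of_list_index)

lemma ketbra_normalized_real_nth:
  assumes "n > 0" "a < length l" "b < length l"
  shows "ketbra (vec_of_list (map (\<lambda>x. complex_of_real (x / sqrt n)) l)) $$ (a, b)
    = complex_of_real (l ! a * l ! b / n)"
proof -
  have "l ! a / sqrt n * (l ! b / sqrt n) = l ! a * l ! b / n"
    using assms(1) by (simp add: field_simps)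
  then show ?thesis
    using assms by (simp add: ketbra_vec_of_list_nth del: vec_of_list_map flip: of_real_mult)
qed

lemma poly_char_poly_eq_det:
  fixes A :: "'a::field mat"
  assumes "A \<in> carrier_mat n n"
  shows "poly (char_poly A) x = det (x \<cdot>\<^sub>m 1\<^sub>m n - A)"
proof -
  have "- char_matrix A x = x \<cdot>\<^sub>m 1\<^sub>m n - A"
    using assms by (intro eq_matI) (auto simp: char_matrix_def)
  then show ?thesis by (simp add: char_poly_matrix[OF assms])
qed

lemma det_mult_triangular_certificate:
  fixes M :: "'a::comm_ring_1 mat"
  assumes M: "M \<in> carrier_mat n n"
    and U: "\<forall>i<n. \<forall>j<n. j < i \<longrightarrow> U ! i ! j = 0"
    and L: "\<forall>i<n. \<forall>j<n. i < j \<longrightarrow> L ! i ! j = 0"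
    and product: "\<forall>i<n. \<forall>j<n. (\<Sum>k = 0..<n. M $$ (i, k) * U ! k ! j) = L ! i ! j"
  shows "det M * (\<Prod>i = 0..<n. U ! i ! i) = (\<Prod>i = 0..<n. L ! i ! i)"
proof -
  define U' where "U' = mat n n (\<lambda>(i, j). U ! i ! j)"
  define L' where "L' = mat n n (\<lambda>(i, j). L ! i ! j)"
  have "U' \<in> carrier_mat n n" "L' \<in> carrier_mat n n"
    by (simp_all add: U'_def L'_def)
  moreover have "M * U' = L'"
    using M product by (intro eq_matI) (auto simp: U'_def L'_def scalar_prod_def)
  moreover have "upper_triangular U'"
    using U by (auto simp: upper_triangular_def U'_def)
  moreover have "\<And>i j. i < j \<Longrightarrow> j < n \<Longrightarrow> L' $$ (i, j) = 0"
    using L by (simp add: L'_def)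
  ultimately have "det M * prod_list (diag_mat U') = prod_list (diag_mat L')"
    using M det_mult det_upper_triangular det_lower_triangular by metis
  then show ?thesis
    by (simp add: prod_list_diag_prod U'_def L'_def)
qed

lemma proots_prod_linear_factors: "proots (\<Prod>a\<leftarrow>xs. [:- a, 1:]) = mset xs"
proof (induction xs)
  case (Cons a xs)
  have "(\<Prod>b\<leftarrow>xs. [:- b, 1:]) \<noteq> 0"
    by (auto simp: prod_list_zero_iff)
  then have "proots ([:- a, 1:] * (\<Prod>b\<leftarrow>xs. [:- b, 1:])) = {#a#} + mset xs"
    using Cons.IH proots_linear_factor[of "- a"] by (subst proots_mult) auto
  then show ?case by simp
qed simp

lemma eigs_desc_upper_triangular:
  assumes "A \<in> carrier_mat n n" "upper_triangular A"
  shows "eigs_desc A = rev (sort (map Re (diag_mat A)))"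
  unfolding eigs_desc_def char_poly_upper_triangular[OF assms] proots_prod_linear_factors
  by (simp flip: mset_map)

lemma real_root_char_poly_mem_eigs_desc:
  fixes A :: "real mat"
  assumes A: "A \<in> carrier_mat n n" and r: "poly (char_poly A) r = 0"
  shows "r \<in> set (eigs_desc (map_mat complex_of_real A))"
proof -
  have cp: "char_poly (map_mat complex_of_real A) = map_poly complex_of_real (char_poly A)"
    by (rule of_real_hom.char_poly_hom[OF A])
  have "char_poly A \<noteq> 0"
    using degree_monic_char_poly[OF A] by auto
  then have "complex_of_real r \<in># proots (char_poly (map_mat complex_of_real A))"
    using r by (simp add: cp of_real_hom.poly_map_poly)
  then show ?thesis
    unfolding eigs_desc_def by (auto intro: image_eqI[of _ _ "complex_of_real r"])
qed

lemma sum_take_3_ge_of_sorted: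
  fixes xs :: "real list"
  assumes sorted: "sorted_wrt (\<ge>) xs" and mem: "a \<in> set xs" "b \<in> set xs" "c \<in> set xs"
    and "c < b" "b < a"
  shows "a + b + c \<le> sum_list (take 3 xs)"
proof -
  have mono: "xs ! j \<le> xs ! i" if "i \<le> j" "j < length xs" for i j
    using sorted that by (cases "i = j") (auto simp: sorted_wrt_iff_nth_less)
  obtain ia ib ic where idx: "ia < length xs" "ib < length xs" "ic < length xs"
    and at: "xs ! ia = a" "xs ! ib = b" "xs ! ic = c"
    using mem by (metis in_set_conv_nth)
  have "ia < ib" "ib < ic"
    using mono[of ib ia] mono[of ic ib] idx at \<open>c < b\<close> \<open>b < a\<close> by (auto simp: not_le[symmetric])
  then obtain x y z t where xs: "xs = x # y # z # t"
    using idx(3) by (cases xs; cases "tl xs"; cases "tl (tl xs)") auto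
  have "a \<le> x" "b \<le> y" "c \<le> z"
    using mono[of 0 ia] mono[of 1 ib] mono[of 2 ic] idx at \<open>ia < ib\<close> \<open>ib < ic\<close> by (auto simp: xs)
  then show ?thesis by (simp add: xs)
qed

lemma top_eig_sum_3_ge:
  assumes "a \<in> set (eigs_desc X)" "b \<in> set (eigs_desc X)" "c \<in> set (eigs_desc X)"
    and "c < b" "b < a"
  shows "a + b + c \<le> top_eig_sum 3 X"
  unfolding top_eig_sum_def
  by (rule sum_take_3_ge_of_sorted) (use assms in \<open>auto simp: eigs_desc_def sorted_wrt_rev\<close>)

lemma not_majorized_of_top_eig_sum_gt:
  assumes "k \<le> dim_row X" "top_eig_sum k X > top_eig_sum k Y"
  shows "\<not> majorized X Y"
  using assms by (auto simp: majorized_def)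

(* 3174276 = 6 * 217 * 46 * 53 clears all denominators of H. *)
definition H_num :: "real mat" where
  "H_num = mat 8 8 (\<lambda>(i, j).
      [[405356, 151900, 239568, 0, 23002, -115010, 0, 0],
       [151900, 193998, 39928, 0, 46004, -230020, 0, 0],
       [239568, 39928, 293484, 92008, -131652, 0, -123278, -115010],
       [0, 0, 92008, 271784, 0, -131652, 46004, -376300],
       [23002, 46004, -131652, 0, 568331, 2387, 458988, 0],
       [-115010, -230020, 0, -131652, 2387, 494985, 39928, 219420],
       [0, 0, -123278, 46004, 458988, 39928, 415013, -57505],
       [0, 0, -115010, -376300, 0, 219420, -57505, 531325]] ! i ! j)"

definition H_real :: "real mat" where
  "H_real = (1 / 3174276) \<cdot>\<^sub>m H_num"

lemma H_num_carrier: "H_num \<in> carrier_mat 8 8"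
  by (simp add: H_num_def)

lemma H_real_carrier: "H_real \<in> carrier_mat 8 8"
  using H_num_carrier by (simp add: H_real_def)

lemma dim_Hmat: "dim_row Hmat = 8" "dim_col Hmat = 8"
  by (simp_all add: Hmat_def embed2_def)

lemma Hmat_nth:
  assumes "i < 8" "j < 8"
  shows "Hmat $$ (i, j) = complex_of_real (H_real $$ (i, j))"
proof -
  have psi:
    "ketbra psiAB $$ (a, b) = complex_of_real ([0, 6, -9, -10] ! a * [0, 6, -9, -10] ! b / 217)"
    "ketbra psiAC $$ (a, b) = complex_of_real ([-2, -4, -1, 5] ! a * [-2, -4, -1, 5] ! b / 46)"
    "ketbra psiBC $$ (a, b) = complex_of_real ([-6, -1, -4, 0] ! a * [-6, -1, -4, 0] ! b / 53)"
    if "a < 4" "b < 4" for a b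
    unfolding psiAB_def psiAC_def psiBC_def
    by (rule ketbra_normalized_real_nth; use that in simp)+
  have "Hmat $$ (i, j) = complex_of_real (1 / 6 * (
      (if qbit i 2 = qbit j 2 then [0, 6, -9, -10] ! (2 * qbit i 0 + qbit i 1)
         * [0, 6, -9, -10] ! (2 * qbit j 0 + qbit j 1) / 217 else 0)
    + (if qbit i 1 = qbit j 1 then [-2, -4, -1, 5] ! (2 * qbit i 0 + qbit i 2)
         * [-2, -4, -1, 5] ! (2 * qbit j 0 + qbit j 2) / 46 else 0)
    + (if qbit i 0 = qbit j 0 then [-6, -1, -4, 0] ! (2 * qbit i 1 + qbit i 2)
         * [-6, -1, -4, 0] ! (2 * qbit j 1 + qbit j 2) / 53 else 0)))"
    using assms by (simp add: Hmat_def embed2_def psi two_qbit_index_less_4)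
  then show ?thesis
    using assms unfolding less_8_cases H_real_def H_num_def
    by (elim disjE; simp add: qbit_def)
qed

lemma Hmat_eq_map_H_real: "Hmat = map_mat complex_of_real H_real"
  using H_real_carrier by (intro eq_matI) (auto simp: Hmat_nth dim_Hmat)

lemma hermitian_Hmat: "hermitian Hmat"
proof -
  have "\<forall>i<8. \<forall>j<8. H_num $$ (i, j) = H_num $$ (j, i)"
    unfolding all_less_8_iff by (simp add: H_num_def)
  then show ?thesis
    unfolding hermitian_def Hmat_eq_map_H_real using H_num_carrier by (auto simp: H_real_def)
qed

definition H_shift :: "real \<Rightarrow> real \<Rightarrow> real mat" where
  "H_shift p q = mat 8 8 (\<lambda>(i, j). (if i = j then 3174276 * p else 0) - q * H_num $$ (i, j))"

lemma poly_char_poly_H_real: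
  assumes "q > 0"
  shows "poly (char_poly H_real) (p / q) = det (H_shift p q) / (3174276 * q) ^ 8"
proof -
  have "H_shift p q = (3174276 * q) \<cdot>\<^sub>m ((p / q) \<cdot>\<^sub>m 1\<^sub>m 8 - H_real)"
    using assms H_num_carrier by (intro eq_matI) (auto simp: H_shift_def H_real_def field_simps)
  then show ?thesis
    using assms H_real_carrier by (simp add: poly_char_poly_eq_det[OF H_real_carrier])
qed

(* Computed by exact elimination outside Isabelle: each cert_Uk is upper triangular and
   H_shift p q times it is the lower triangular cert_Lk; only this product is checked here. *)
definition cert_U1 :: "real list list" where
  "cert_U1 =
    [[1, 350000, -474808000, -412133344000000, 5788241235662839000, 1946456259921024655000, 9199254349417766494000000, -88647015085704630490000000],
     [0, 503201, -196468000, -170534224000000, 2776528984957678000, 10993847364664329310000, -30422501113488581344000000, -53668298220836233640000000],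
     [0, 0, -308260979, -267570529772000, 3120839843508986000, -15752603404875115000000, 63140344666579516782811000, -29180609916130740386695000],
     [0, 0, 0, 186667225749169, 815834826632000000, 604713715694417606000, 547469938797260993902000, 42223273838399081972150000],
     [0, 0, 0, 0, 4116227163672239163, 46815724103039425501500, -152435343731319099767206000, -22801174286817750740000000],
     [0, 0, 0, 0, 0, -12625720229607464895627, 43386594945621162220764000, 32102654150730054756690000],
     [0, 0, 0, 0, 0, 0, 2069458328303137200438267, -1468032426093951968347500],
     [0, 0, 0, 0, 0, 0, 0, -58038052375307345129055837]]"

definition cert_L1 :: "real list list" where
  "cert_L1 =
    [[436778468, 0, 0, 0, 0, 0, 0, 0],
     [-303800000, 326168475792068, 0, 0, 0, 0, 0, 0],
     [-479136000, -207881219056000, 39573451858823828, 0, 0, 0, 0, 0],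
     [0, 0, 56724952311664000, 180636512850592543429092, 0, 0, 0, 0],
     [-46004000, -62399917608000, -41246653838616000, -35802095531918688000000, 756179635991650287528892284, 0, 0, 0],
     [230020000, 311999588040000, -199598474880000000, -124101248987180805624000, 2803887347979237272135838000, 2189677301510923046686126806564, 0, 0],
     [0, 0, -76003593938324000, -83145997645194773352000, -3084199289071742921678088000, -45907009019202186776492622288000, 152848491696681417862087149271996956, 0],
     [0, 0, -70906190389580000, 78939180840669149400000, 1331852871327180159720000000, 2372364772803184632772552680000, -3866196967452807945144837252330000, 80564078178992225694819215788284]]"

lemma det_H_shift_393_2000: "det (H_shift 393 2000) < 0"
proof -
  have "det (H_shift 393 2000) * (\<Prod>i = 0..<8. cert_U1 ! i ! i) = (\<Prod>i = 0..<8. cert_L1 ! i ! i)"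
    by (rule det_mult_triangular_certificate, unfold all_less_8_iff sum_atLeastLessThan_0_8)
      (simp_all add: H_shift_def H_num_def cert_U1_def cert_L1_def)
  then show ?thesis
    by (simp add: prod_atLeastLessThan_0_8 cert_U1_def cert_L1_def)
qed

definition cert_U2 :: "real list list" where
  "cert_U2 =
    [[1, 35000, 8672800, 752799040000, -1101408713386900, -17304050638806234500, 191190519638524220000, 130330668810489100000],
     [0, 136991, 2618800, 227311840000, 1512654787306200, -17685113301621669000, 31027690948345280000, 220454007485207600000],
     [0, 0, 19862999, 1724108313200, -7184660892300600, -8149366297180650000, 505345136488904521300, -159073862821123254500],
     [0, 0, 0, 11178481815101, -907889755920000, -9909475207832933400, 22786309523394646600, 497338769463377965000],
     [0, 0, 0, 0, 36371185404470057, -49837428513640850, -1309752775976570059800, 1164975818632811600000],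
     [0, 0, 0, 0, 0, 49109851982205746373, -156681112116878428800, -480933727471982961000],
     [0, 0, 0, 0, 0, 0, -1098429925042464376749, 1023621202864910622750],
     [0, 0, 0, 0, 0, 0, 0, -707808409977861843627]]"

definition cert_L2 :: "real list list" where
  "cert_L2 =
    [[118908188, 0, 0, 0, 0, 0, 0, 0],
     [-30380000, 21016880337908, 0, 0, 0, 0, 0, 0],
     [-47913600, -2770931329600, 2369838144801412, 0, 0, 0, 0, 0],
     [0, 0, -365510962398400, 1596113100289763981388, 0, 0, 0, 0],
     [-4600400, -1421440792800, 459007304709600, 39841834048793280000, 2941287254918266561771716, 0, 0, 0],
     [23002000, 7107203964000, 319967020800000, 322107034989775370400, 2984863268538977788200, 3486719748744093651969308724, 0, 0],
     [0, 0, 489734158144400, -60342050557447360800, -3507576342315318441823200, -497349093845916391457548800, 5242484912912070556928857788, 0],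
     [0, 0, 456888702998000, 880950480824727660000, -233589352875237601200000, -3088375572096372852816732000, 7581597840472173074527551000, 316829985403769654606744724]]"

lemma det_H_shift_63_200: "det (H_shift 63 200) > 0"
proof -
  have "det (H_shift 63 200) * (\<Prod>i = 0..<8. cert_U2 ! i ! i) = (\<Prod>i = 0..<8. cert_L2 ! i ! i)"
    by (rule det_mult_triangular_certificate, unfold all_less_8_iff sum_atLeastLessThan_0_8)
      (simp_all add: H_shift_def H_num_def cert_U2_def cert_L2_def)
  then show ?thesis
    by (simp add: prod_atLeastLessThan_0_8 cert_U2_def cert_L2_def)
qed

definition cert_U3 :: "real list list" where
  "cert_U3 =
    [[1, 87500, 55654000, 389578000000, -129029061379752750, -5798532317748918108750, -483517913914755627375000, 152882114332043424375000],
     [0, 355277, 16609000, 116263000000, 204284201266494500, -6064844950282041217500, -66673448251733844500000, 101516993471403652500000],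
     [0, 0, 132748541, 929239787000, -933482108496228500, -2660471351427852187500, -1353361726593253454629750, 220618032288401872203750],
     [0, 0, 0, 6294040555283, -114466292286500000, -3402841295458632603000, -41434789728301351539500, 219685683622255943987500],
     [0, 0, 0, 0, 4913555133724290301, -44675809872199310125, 3581767985334616830681000, -274595846259323356875000],
     [0, 0, 0, 0, 0, 17534705390571374032558, 402164146651782941898500, -281145185085798463432500],
     [0, 0, 0, 0, 0, 0, 3181808868747068492702389, -224577982344324077960625],
     [0, 0, 0, 0, 0, 0, 0, -313199377113027190242292]]"

definition cert_L3 :: "real list list" where
  "cert_L3 =
    [[308380436, 0, 0, 0, 0, 0, 0, 0],
     [-75950000, 140460169243772, 0, 0, 0, 0, 0, 0],
     [-119784000, -17573850028000, 41364434529319876, 0, 0, 0, 0, 0],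
     [0, 0, -6106963880164000, 2318564016003836081388, 0, 0, 0, 0],
     [-11501000, -9178419054000, 7716188587866000, 54013320115062000000, 1050188575252100733557963736, 0, 0, 0],
     [57505000, 45892095270000, 5110584360000000, 450085604112058758000, 2675723604865761082006500, 3366646509550323195580456181788, 0, 0],
     [0, 0, 8182487318699000, -87498109621726566000, -1182537371889347233849194000, -425526666259078316559267662000, 53354394607852623690233403525104, 0],
     [0, 0, 7633704850205000, 1237659664427931450000, -75216721542780594892500000, -2716967523203985809408575680000, -38257490805641958919899694027500, 1549906837411491750984161312188]]"

lemma det_H_shift_161_500: "det (H_shift 161 500) < 0"
proof -
  have "det (H_shift 161 500) * (\<Prod>i = 0..<8. cert_U3 ! i ! i) = (\<Prod>i = 0..<8. cert_L3 ! i ! i)"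
    by (rule det_mult_triangular_certificate, unfold all_less_8_iff sum_atLeastLessThan_0_8)
      (simp_all add: H_shift_def H_num_def cert_U3_def cert_L3_def)
  then show ?thesis
    by (simp add: prod_atLeastLessThan_0_8 cert_U3_def cert_L3_def)
qed

definition cert_U4 :: "real list list" where
  "cert_U4 =
    [[1, 50, 740, 91760, 21834471, -63522096672, -22749200660, -189225631820],
     [0, 389, 182, 22568, 225578318, -89516638796, 2512827858, -175988566060],
     [0, 0, 3535, 438340, -746500622, -17948631046, -139999529595, -403790977010],
     [0, 0, 0, 5914447, -52217144, -50969924722, 20228206514, -1092281958360],
     [0, 0, 0, 0, 7407003709, -1993167563, 450260734400, -24302335180],
     [0, 0, 0, 0, 0, 496704012985, 35508082016, 865980204720],
     [0, 0, 0, 0, 0, 0, 959982590287, -147144647955],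
     [0, 0, 0, 0, 0, 0, 0, 3398374101907]]"

definition cert_L4 :: "real list list" where
  "cert_L4 =
    [[2363564, 0, 0, 0, 0, 0, 0, 0],
     [-303800, 1068672920, 0, 0, 0, 0, 0, 0],
     [-479136, -55020784, 8777039348, 0, 0, 0, 0, 0],
     [0, 0, -650496560, 15478521465036, 0, 0, 0, 0],
     [-46004, -38091312, 879991224, 109118911776, 14874298372848810, 0, 0, 0],
     [230020, 190456560, 253942080, 1588786370808, 59687395841598, 1015749898921952404, 0, 0],
     [0, 0, 871575460, -436101082536, -6978701449145664, -37570817516473472, 1797896225117490722, 0],
     [0, 0, 813120700, 4552039779000, -211008695646840, -260462098517315520, 77846287422000930, 5864213849919265232]]"

lemma det_H_shift_1_2: "det (H_shift 1 2) > 0"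
proof -
  have "det (H_shift 1 2) * (\<Prod>i = 0..<8. cert_U4 ! i ! i) = (\<Prod>i = 0..<8. cert_L4 ! i ! i)"
    by (rule det_mult_triangular_certificate, unfold all_less_8_iff sum_atLeastLessThan_0_8)
      (simp_all add: H_shift_def H_num_def cert_U4_def cert_L4_def)
  then show ?thesis
    by (simp add: prod_atLeastLessThan_0_8 cert_U4_def cert_L4_def)
qed

lemma char_poly_H_real_sign_changes:
  "poly (char_poly H_real) (393 / 2000) < 0" "poly (char_poly H_real) (63 / 200) > 0"
  "poly (char_poly H_real) (161 / 500) < 0" "poly (char_poly H_real) (1 / 2) > 0"
  using poly_char_poly_H_real[of 2000 393] poly_char_poly_H_real[of 200 63]
    poly_char_poly_H_real[of 500 161] poly_char_poly_H_real[of 2 1]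
    det_H_shift_393_2000 det_H_shift_63_200 det_H_shift_161_500 det_H_shift_1_2
  by (simp_all add: divide_neg_pos)

lemma top_eig_sum_Hmat: "top_eig_sum 3 Hmat > 5 / 6"
proof -
  note sign = char_poly_H_real_sign_changes
  obtain r1 where r1: "393 / 2000 < r1" "r1 < 63 / 200" "poly (char_poly H_real) r1 = 0"
    using poly_IVT_pos[OF _ sign(1,2)] by auto
  obtain r2 where r2: "63 / 200 < r2" "r2 < 161 / 500" "poly (char_poly H_real) r2 = 0"
    using poly_IVT_neg[OF _ sign(2,3)] by auto
  obtain r3 where r3: "161 / 500 < r3" "r3 < 1 / 2" "poly (char_poly H_real) r3 = 0"
    using poly_IVT_pos[OF _ sign(3,4)] by auto
  have "r3 + r2 + r1 \<le> top_eig_sum 3 Hmat"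
    unfolding Hmat_eq_map_H_real
    by (rule top_eig_sum_3_ge) (use r1 r2 r3 real_root_char_poly_mem_eigs_desc[OF H_real_carrier] in auto)
  then show ?thesis
    using r1 r2 r3 by linarith
qed

definition Htarget_spectrum :: "real list" where
  "Htarget_spectrum = [1/2, 1/6, 1/6, 0, 1/6, 0, 0, 0]"

lemma dim_Htarget: "dim_row Htarget = 8" "dim_col Htarget = 8"
  by (simp_all add: Htarget_def embed2_def)

lemma Htarget_nth:
  assumes "i < 8" "j < 8"
  shows "Htarget $$ (i, j) = (if i = j then complex_of_real (Htarget_spectrum ! i) else 0)"
proof -
  have ket: "ketbra ket00 $$ (a, b) = [1, 0, 0, 0] ! a * cnj ([1, 0, 0, 0] ! b)"
    if "a < 4" "b < 4" for a b
    unfolding ket00_def by (rule ketbra_vec_of_list_nth) (use that in simp_all)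
  have "Htarget $$ (i, j) = 1 / 6 * (
      (if qbit i 2 = qbit j 2 then [1, 0, 0, 0] ! (2 * qbit i 0 + qbit i 1)
         * cnj ([1, 0, 0, 0] ! (2 * qbit j 0 + qbit j 1)) else 0)
    + (if qbit i 1 = qbit j 1 then [1, 0, 0, 0] ! (2 * qbit i 0 + qbit i 2)
         * cnj ([1, 0, 0, 0] ! (2 * qbit j 0 + qbit j 2)) else 0)
    + (if qbit i 0 = qbit j 0 then [1, 0, 0, 0] ! (2 * qbit i 1 + qbit i 2)
         * cnj ([1, 0, 0, 0] ! (2 * qbit j 1 + qbit j 2)) else 0))"
    using assms by (simp add: Htarget_def embed2_def ket two_qbit_index_less_4)
  then show ?thesis
    using assms unfolding less_8_cases
    by (elim disjE; simp add: qbit_def Htarget_spectrum_def)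
qed

lemma Htarget_eq_mat_diag:
  "Htarget = mat_diag 8 (\<lambda>i. complex_of_real (Htarget_spectrum ! i))"
  by (rule eq_matI) (simp_all add: Htarget_nth dim_Htarget mat_diag_def)

lemma hermitian_Htarget: "hermitian Htarget"
  unfolding hermitian_def Htarget_eq_mat_diag by (auto simp: mat_diag_def)

lemma top_eig_sum_Htarget: "top_eig_sum 3 Htarget = 5 / 6"
proof -
  have triangular: "upper_triangular (mat_diag 8 (\<lambda>i. complex_of_real (Htarget_spectrum ! i)))"
    by (auto simp: upper_triangular_def mat_diag_def)
  show ?thesis
    unfolding top_eig_sum_def Htarget_eq_mat_diag eigs_desc_upper_triangular[OF mat_diag_dim triangular]
    by (simp add: diag_mat_def mat_diag_def upt_rec Htarget_spectrum_def)
qed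

theorem mainTheorem1:
  shows "hermitian Hmat \<and> hermitian Htarget \<and>
         top_eig_sum 3 Hmat > 5/6 \<and> top_eig_sum 3 Htarget = 5/6 \<and>
         \<not> majorized Hmat Htarget"
proof -
  have "\<not> majorized Hmat Htarget"
    using top_eig_sum_Hmat top_eig_sum_Htarget
    by (intro not_majorized_of_top_eig_sum_gt[of 3]) (simp_all add: dim_Hmat)
  then show ?thesis
    using hermitian_Hmat hermitian_Htarget top_eig_sum_Hmat top_eig_sum_Htarget by blast
qed

end
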